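(* Let $X$ be a phylogenetic vertex of a quiver. Then: (i) $X$ has a primitive ancestor; (ii) all primitive ancestors of $X$ are isotypic to each other; (iii) every short full evolution for $X$ is universal; (iv) every vertex appearing in a short full evolution for $X$ is phylogenetic.
   Context: A quiver consists of a class of vertices and, for each ordered pair of vertices $(A,B)$, a set of edges $A\to B$ (loops and multiple edges allowed). An evolution of length $m\ge 0$ is a sequence $A_0\leftarrow A_1\leftarrow\cdots\leftarrow A_m$ of vertices together with edges $A_k\to A_{k-1}$ ($1\le k\le m$); $A_0$ is its initial and $A_m$ its terminal vertex. Write $A\le B$ ($A$ is an ancestor of $B$) if there is an evolution with initial vertex $A$ and terminal vertex $B$; $A,B$ are isotypic ($A\sim B$) if $A\le B$ and $B\le A$. A vertex $A$ is primitive if every ancestor of $A$ is isotypic to $A$. A full evolution for $X$ is an evolution with primitive initial vertex and terminal vertex $X$. The height $h(X)$ is the smallest length of a full evolution for $X$ ($\infty$ if none); a full evolution for $X$ is short if its length equals $h(X)$. An evolution $\alpha=(A_0\leftarrow\cdots\leftarrow A_m)$ embeds in $\beta=(B_0\leftarrow\cdots\leftarrow B_n)$ if $m\le n$ and there are $0\le r_0<\cdots<r_m\le n$ with $A_k\sim B_{r_k}$. A universal evolution for $X$ is a full evolution for $X$ embedding in every full evolution for $X$; $X$ is phylogenetic if one exists. *)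

theory Defs
  imports Main "HOL-Library.Extended_Nat"
begin

text \<open>A quiver on vertex type 'v with edge type 'e: Q A B is the set of edges A \<rightarrow> B.
An evolution A_0 \<leftarrow> A_1 \<leftarrow> ... \<leftarrow> A_m is a pair (vertex list [A_0,...,A_m],
edge list [e_1,...,e_m]) with e_k an edge A_k \<rightarrow> A_(k-1).\<close>

type_synonym ('v, 'e) quiver = "'v \<Rightarrow> 'v \<Rightarrow> 'e set"
type_synonym ('v, 'e) evol = "'v list \<times> 'e list"

definition evolution :: "('v, 'e) quiver \<Rightarrow> ('v, 'e) evol \<Rightarrow> bool" where
  "evolution Q ev \<longleftrightarrow> fst ev \<noteq> [] \<and> length (snd ev) = length (fst ev) - 1 \<and>
     (\<forall>k. 1 \<le> k \<and> k < length (fst ev) \<longrightarrow> snd ev ! (k - 1) \<in> Q (fst ev ! k) (fst ev ! (k - 1)))"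

definition evlen :: "('v, 'e) evol \<Rightarrow> nat" where
  "evlen ev = length (fst ev) - 1"

definition initial :: "('v, 'e) evol \<Rightarrow> 'v" where
  "initial ev = hd (fst ev)"

definition terminal :: "('v, 'e) evol \<Rightarrow> 'v" where
  "terminal ev = last (fst ev)"

definition ancestor :: "('v, 'e) quiver \<Rightarrow> 'v \<Rightarrow> 'v \<Rightarrow> bool" where
  "ancestor Q A B \<longleftrightarrow> (\<exists>ev. evolution Q ev \<and> initial ev = A \<and> terminal ev = B)"

definition isotypic :: "('v, 'e) quiver \<Rightarrow> 'v \<Rightarrow> 'v \<Rightarrow> bool" where
  "isotypic Q A B \<longleftrightarrow> ancestor Q A B \<and> ancestor Q B A"

definition primitive :: "('v, 'e) quiver \<Rightarrow> 'v \<Rightarrow> bool" where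
  "primitive Q A \<longleftrightarrow> (\<forall>B. ancestor Q B A \<longrightarrow> isotypic Q B A)"

definition full_evolution :: "('v, 'e) quiver \<Rightarrow> 'v \<Rightarrow> ('v, 'e) evol \<Rightarrow> bool" where
  "full_evolution Q X ev \<longleftrightarrow> evolution Q ev \<and> primitive Q (initial ev) \<and> terminal ev = X"

definition height :: "('v, 'e) quiver \<Rightarrow> 'v \<Rightarrow> enat" where
  "height Q X = (if \<exists>ev. full_evolution Q X ev
                 then enat (LEAST m. \<exists>ev. full_evolution Q X ev \<and> evlen ev = m)
                 else \<infinity>)"

definition short_evolution :: "('v, 'e) quiver \<Rightarrow> 'v \<Rightarrow> ('v, 'e) evol \<Rightarrow> bool" where
  "short_evolution Q X ev \<longleftrightarrow> full_evolution Q X ev \<and> enat (evlen ev) = height Q X"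

definition embeds :: "('v, 'e) quiver \<Rightarrow> ('v, 'e) evol \<Rightarrow> ('v, 'e) evol \<Rightarrow> bool" where
  "embeds Q \<alpha> \<beta> \<longleftrightarrow> evlen \<alpha> \<le> evlen \<beta> \<and>
     (\<exists>r :: nat \<Rightarrow> nat. strict_mono_on {0..evlen \<alpha>} r \<and>
        (\<forall>k \<le> evlen \<alpha>. r k \<le> evlen \<beta> \<and> isotypic Q (fst \<alpha> ! k) (fst \<beta> ! r k)))"

definition universal_evolution :: "('v, 'e) quiver \<Rightarrow> 'v \<Rightarrow> ('v, 'e) evol \<Rightarrow> bool" where
  "universal_evolution Q X ev \<longleftrightarrow> full_evolution Q X ev \<and>
     (\<forall>\<beta>. full_evolution Q X \<beta> \<longrightarrow> embeds Q ev \<beta>)"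

definition phylogenetic :: "('v, 'e) quiver \<Rightarrow> 'v \<Rightarrow> bool" where
  "phylogenetic Q X \<longleftrightarrow> (\<exists>ev. universal_evolution Q X ev)"

end

theory Submission
  imports Defs
begin

text \<open>Fix a universal evolution \<open>U\<close> for \<open>X\<close>. It embeds into every full evolution,
so it is no longer than any of them; hence a short full evolution \<open>S\<close> has the same length as
\<open>U\<close>, the embedding of \<open>U\<close> into \<open>S\<close> is the identity on indices, and \<open>S\<close> is vertexwise
isotypic to \<open>U\<close>, hence universal itself. A primitive ancestor \<open>A\<close> of \<open>X\<close> starts a full
evolution, into which the initial vertex of \<open>U\<close> embeds, so \<open>A\<close> is an ancestor of that
primitive vertex and therefore isotypic to it. Finally, every prefix of a universal evolution
is universal for its terminal vertex: a full evolution of that vertex, extended by the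
remaining tail, is a full evolution of \<open>X\<close>, and the embedding of the universal evolution must
map the prefix into the part before the tail.\<close>

definition prefix_evol :: "nat \<Rightarrow> ('v, 'e) evol \<Rightarrow> ('v, 'e) evol" where
  "prefix_evol i ev = (take (Suc i) (fst ev), take i (snd ev))"

definition suffix_evol :: "nat \<Rightarrow> ('v, 'e) evol \<Rightarrow> ('v, 'e) evol" where
  "suffix_evol i ev = (drop i (fst ev), drop i (snd ev))"

definition concat_evol :: "('v, 'e) evol \<Rightarrow> ('v, 'e) evol \<Rightarrow> ('v, 'e) evol" where
  "concat_evol a b = (fst a @ tl (fst b), snd a @ snd b)"

lemma evolution_iff:
  "evolution Q ev \<longleftrightarrow> length (fst ev) = Suc (evlen ev) \<and> length (snd ev) = evlen ev \<and>
     (\<forall>k < evlen ev. snd ev ! k \<in> Q (fst ev ! Suc k) (fst ev ! k))"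
proof -
  have shift: "(\<forall>k. 1 \<le> k \<and> k < Suc n \<longrightarrow> P (k - 1) k) \<longleftrightarrow> (\<forall>k < n. P k (Suc k))"
    for n and P :: "nat \<Rightarrow> nat \<Rightarrow> bool"
  proof
    assume "\<forall>k. 1 \<le> k \<and> k < Suc n \<longrightarrow> P (k - 1) k"
    then show "\<forall>k < n. P k (Suc k)"
      by (metis One_nat_def Suc_le_mono Suc_less_eq diff_Suc_1 le0)
  next
    assume "\<forall>k < n. P k (Suc k)"
    then show "\<forall>k. 1 \<le> k \<and> k < Suc n \<longrightarrow> P (k - 1) k"
      by (metis One_nat_def Suc_diff_1 Suc_less_eq le_eq_less_or_eq less_one not_less0 zero_less_iff_neq_zero)
  qed
  show ?thesis
  proof (cases "fst ev = []")
    case False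
    then have "length (fst ev) = Suc (evlen ev)"
      by (simp add: evlen_def)
    with False show ?thesis
      using shift[of "evlen ev" "\<lambda>i k. snd ev ! i \<in> Q (fst ev ! k) (fst ev ! i)"]
      unfolding evolution_def by (simp add: evlen_def)
  qed (simp add: evolution_def evlen_def)
qed

lemma length_vertices_evolution: "evolution Q ev \<Longrightarrow> length (fst ev) = Suc (evlen ev)"
  by (simp add: evolution_iff)

lemma nth_0_evolution: "evolution Q ev \<Longrightarrow> fst ev ! 0 = initial ev"
  by (cases "fst ev") (auto simp: evolution_iff initial_def)

lemma in_vertices_evolutionE:
  assumes "evolution Q ev" "Y \<in> set (fst ev)"
  obtains k where "k \<le> evlen ev" "Y = fst ev ! k"
  using assms by (metis in_set_conv_nth length_vertices_evolution less_Suc_eq_le)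

lemma
  assumes "evolution Q ev" "i \<le> evlen ev"
  shows evolution_prefix_evol: "evolution Q (prefix_evol i ev)"
    and evlen_prefix_evol: "evlen (prefix_evol i ev) = i"
    and initial_prefix_evol: "initial (prefix_evol i ev) = initial ev"
    and terminal_prefix_evol: "terminal (prefix_evol i ev) = fst ev ! i"
proof -
  have len: "i < length (fst ev)"
    using assms by (simp add: length_vertices_evolution)
  show "evolution Q (prefix_evol i ev)" "evlen (prefix_evol i ev) = i"
    using assms by (auto simp: evolution_iff prefix_evol_def evlen_def)
  show "initial (prefix_evol i ev) = initial ev"
    by (simp add: prefix_evol_def initial_def hd_take)
  show "terminal (prefix_evol i ev) = fst ev ! i"
    using len by (simp add: prefix_evol_def terminal_def take_Suc_conv_app_nth)
qed

lemma nth_prefix_evol: "k \<le> i \<Longrightarrow> fst (prefix_evol i ev) ! k = fst ev ! k"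
  by (simp add: prefix_evol_def)

lemma
  assumes "evolution Q ev" "i \<le> evlen ev"
  shows evolution_suffix_evol: "evolution Q (suffix_evol i ev)"
    and evlen_suffix_evol: "evlen (suffix_evol i ev) = evlen ev - i"
    and initial_suffix_evol: "initial (suffix_evol i ev) = fst ev ! i"
    and terminal_suffix_evol: "terminal (suffix_evol i ev) = terminal ev"
  using assms
  by (auto simp: evolution_iff suffix_evol_def evlen_def initial_def terminal_def hd_drop_conv_nth)

lemma nth_concat_evol_left:
  assumes "evolution Q a" "k \<le> evlen a"
  shows "fst (concat_evol a b) ! k = fst a ! k"
  using assms by (simp add: concat_evol_def nth_append length_vertices_evolution)

lemma vertices_concat_evol:
  assumes "evolution Q a" "evolution Q b" "terminal a = initial b"
  shows "fst (concat_evol a b) = butlast (fst a) @ fst b"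
proof -
  have "fst a = butlast (fst a) @ [initial b]"
    using assms(1,3) by (metis append_butlast_last_id evolution_def terminal_def)
  moreover have "fst b = initial b # tl (fst b)"
    using assms(2) by (cases "fst b") (simp_all add: evolution_def initial_def)
  ultimately show ?thesis
    unfolding concat_evol_def by (metis append.assoc append_Cons append_Nil fst_conv)
qed

lemma nth_concat_evol_right:
  assumes "evolution Q a" "evolution Q b" "terminal a = initial b" "evlen a \<le> k"
  shows "fst (concat_evol a b) ! k = fst b ! (k - evlen a)"
  using assms by (simp add: vertices_concat_evol nth_append length_vertices_evolution)

lemma
  assumes "evolution Q a" "evolution Q b" "terminal a = initial b"
  shows evolution_concat_evol: "evolution Q (concat_evol a b)"
    and evlen_concat_evol: "evlen (concat_evol a b) = evlen a + evlen b"
    and initial_concat_evol: "initial (concat_evol a b) = initial a"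
    and terminal_concat_evol: "terminal (concat_evol a b) = terminal b"
proof -
  have len: "length (fst a) = Suc (evlen a)" "length (fst b) = Suc (evlen b)"
    "length (snd a) = evlen a" "length (snd b) = evlen b"
    using assms(1,2) by (simp_all add: evolution_iff)
  show evlen: "evlen (concat_evol a b) = evlen a + evlen b"
    using len by (simp add: concat_evol_def evlen_def)
  show "initial (concat_evol a b) = initial a"
    using len by (cases "fst a") (simp_all add: concat_evol_def initial_def)
  show "terminal (concat_evol a b) = terminal b"
    using assms len by (cases "fst b") (simp_all add: vertices_concat_evol terminal_def)
  have "snd (concat_evol a b) ! k
          \<in> Q (fst (concat_evol a b) ! Suc k) (fst (concat_evol a b) ! k)"
    if k: "k < evlen a + evlen b" for k
  proof (cases "k < evlen a")
    case True
    have "snd (concat_evol a b) ! k = snd a ! k"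
      using True len by (simp add: concat_evol_def nth_append)
    with True show ?thesis
      using assms(1) nth_concat_evol_left[OF assms(1), of k b] nth_concat_evol_left[OF assms(1), of "Suc k" b]
      by (simp add: evolution_iff)
  next
    case False
    define j where "j = k - evlen a"
    have j: "j < evlen b" "k = evlen a + j"
      using False k by (auto simp: j_def)
    have "snd (concat_evol a b) ! k = snd b ! j"
      using j len by (simp add: concat_evol_def nth_append)
    moreover have "fst (concat_evol a b) ! k = fst b ! j"
      "fst (concat_evol a b) ! Suc k = fst b ! Suc j"
      using nth_concat_evol_right[OF assms] j by simp_all
    ultimately show ?thesis
      using assms(2) j(1) by (simp add: evolution_iff)
  qed
  then show "evolution Q (concat_evol a b)"
    using len evlen by (simp add: evolution_iff concat_evol_def)
qed

lemma ancestor_trans: "ancestor Q A B \<Longrightarrow> ancestor Q B C \<Longrightarrow> ancestor Q A C"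
  unfolding ancestor_def
  by (metis evolution_concat_evol initial_concat_evol terminal_concat_evol)

lemma ancestor_nth:
  "evolution Q ev \<Longrightarrow> k \<le> evlen ev \<Longrightarrow> ancestor Q (initial ev) (fst ev ! k)"
  unfolding ancestor_def
  by (metis evolution_prefix_evol initial_prefix_evol terminal_prefix_evol)

lemma isotypic_sym: "isotypic Q A B \<Longrightarrow> isotypic Q B A"
  by (simp add: isotypic_def)

lemma isotypic_trans: "isotypic Q A B \<Longrightarrow> isotypic Q B C \<Longrightarrow> isotypic Q A C"
  unfolding isotypic_def by (metis ancestor_trans)

lemma strict_mono_on_nat_gap:
  assumes "strict_mono_on {0..n} (r :: nat \<Rightarrow> nat)" "i \<le> j" "j \<le> n"
  shows "r i + (j - i) \<le> r j"
  using assms(2,3)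
proof (induction j)
  case (Suc j)
  show ?case
  proof (cases "i = Suc j")
    case False
    then have "r i + (j - i) \<le> r j" "i \<le> j"
      using Suc by simp_all
    moreover have "r j < r (Suc j)"
      using Suc.prems by (intro strict_mono_onD[OF assms(1)]) auto
    ultimately show ?thesis by simp
  qed simp
qed simp

lemma embeds_equal_evlen_isotypic_nth:
  assumes "embeds Q \<alpha> \<beta>" "evlen \<beta> = evlen \<alpha>" "k \<le> evlen \<alpha>"
  shows "isotypic Q (fst \<alpha> ! k) (fst \<beta> ! k)"
proof -
  obtain r where r: "strict_mono_on {0..evlen \<alpha>} r"
    and rk: "\<And>j. j \<le> evlen \<alpha> \<Longrightarrow> r j \<le> evlen \<beta> \<and> isotypic Q (fst \<alpha> ! j) (fst \<beta> ! r j)"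
    using assms(1) unfolding embeds_def by blast
  have "r 0 + k \<le> r k" "r k + (evlen \<alpha> - k) \<le> r (evlen \<alpha>)" "r (evlen \<alpha>) \<le> evlen \<alpha>"
    using strict_mono_on_nat_gap[OF r, of 0 k] strict_mono_on_nat_gap[OF r, of k "evlen \<alpha>"]
      rk[of "evlen \<alpha>"] assms(2,3) by simp_all
  then have "r k = k"
    using assms(3) by linarith
  then show ?thesis
    using rk[OF assms(3)] by simp
qed

lemma embeds_isotypic_vertices:
  assumes "embeds Q \<alpha> \<beta>" "evlen \<alpha>' = evlen \<alpha>"
    and "\<And>k. k \<le> evlen \<alpha> \<Longrightarrow> isotypic Q (fst \<alpha>' ! k) (fst \<alpha> ! k)"
  shows "embeds Q \<alpha>' \<beta>"
  using assms unfolding embeds_def by (metis isotypic_trans)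

lemma height_le_evlen:
  assumes "full_evolution Q X ev"
  shows "height Q X \<le> enat (evlen ev)"
proof -
  have ex: "\<exists>ev. full_evolution Q X ev"
    using assms by blast
  have "(LEAST m. \<exists>ev. full_evolution Q X ev \<and> evlen ev = m) \<le> evlen ev"
    using assms by (intro Least_le) blast
  then show ?thesis
    unfolding height_def if_P[OF ex] by simp
qed

lemma universal_evolution_evlen_le:
  "universal_evolution Q X U \<Longrightarrow> full_evolution Q X \<beta> \<Longrightarrow> evlen U \<le> evlen \<beta>"
  unfolding universal_evolution_def embeds_def by blast

lemma short_evolution_evlen:
  assumes "universal_evolution Q X U" "short_evolution Q X S"
  shows "evlen S = evlen U"
proof -
  have "enat (evlen S) \<le> enat (evlen U)"
    using assms height_le_evlen[of Q X U] by (simp add: short_evolution_def universal_evolution_def)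
  moreover have "evlen U \<le> evlen S"
    using assms by (simp add: universal_evolution_evlen_le short_evolution_def)
  ultimately show ?thesis by simp
qed

lemma short_evolution_universal:
  assumes U: "universal_evolution Q X U" and S: "short_evolution Q X S"
  shows "universal_evolution Q X S"
proof -
  have S_full: "full_evolution Q X S"
    using S by (simp add: short_evolution_def)
  have len: "evlen S = evlen U"
    using short_evolution_evlen[OF U S] .
  have "isotypic Q (fst S ! k) (fst U ! k)" if "k \<le> evlen U" for k
    using U S_full len that
    by (metis embeds_equal_evlen_isotypic_nth isotypic_sym universal_evolution_def)
  then show ?thesis
    using U S_full len embeds_isotypic_vertices by (metis universal_evolution_def)
qed

lemma primitive_ancestor_isotypic_initial:
  assumes U: "universal_evolution Q X U" and A: "primitive Q A" "ancestor Q A X"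
  shows "isotypic Q A (initial U)"
proof -
  obtain \<beta> where \<beta>: "evolution Q \<beta>" "initial \<beta> = A" "terminal \<beta> = X"
    using A(2) unfolding ancestor_def by blast
  then have "embeds Q U \<beta>"
    using U A(1) unfolding universal_evolution_def full_evolution_def by blast
  then obtain r where "\<forall>j \<le> evlen U. r j \<le> evlen \<beta> \<and> isotypic Q (fst U ! j) (fst \<beta> ! r j)"
    unfolding embeds_def by blast
  then have "r 0 \<le> evlen \<beta>" "isotypic Q (fst U ! 0) (fst \<beta> ! r 0)"
    by simp_all
  moreover have "fst U ! 0 = initial U"
    using U by (metis universal_evolution_def full_evolution_def nth_0_evolution)
  ultimately have "ancestor Q A (initial U)"
    using ancestor_nth[OF \<beta>(1)] \<beta>(2) ancestor_trans unfolding isotypic_def by metis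
  then show ?thesis
    using U by (simp add: universal_evolution_def full_evolution_def primitive_def isotypic_sym)
qed

lemma universal_evolution_prefix:
  assumes S: "universal_evolution Q X S" and k: "k \<le> evlen S"
  shows "universal_evolution Q (fst S ! k) (prefix_evol k S)"
  unfolding universal_evolution_def
proof (intro conjI allI impI)
  have S_evol: "evolution Q S" and S_prim: "primitive Q (initial S)" and S_term: "terminal S = X"
    using S by (simp_all add: universal_evolution_def full_evolution_def)
  show "full_evolution Q (fst S ! k) (prefix_evol k S)"
    using S_evol S_prim k
    by (simp add: full_evolution_def evolution_prefix_evol initial_prefix_evol terminal_prefix_evol)
  fix \<beta> assume \<beta>: "full_evolution Q (fst S ! k) \<beta>"
  define tail where "tail = suffix_evol k S"
  have tail: "evolution Q tail" "terminal \<beta> = initial tail" "terminal tail = X" "evlen tail = evlen S - k"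
    using S_evol S_term k \<beta>
    by (simp_all add: tail_def full_evolution_def evolution_suffix_evol initial_suffix_evol
        terminal_suffix_evol evlen_suffix_evol)
  have \<beta>_evol: "evolution Q \<beta>"
    using \<beta> by (simp add: full_evolution_def)
  have "full_evolution Q X (concat_evol \<beta> tail)"
    using \<beta> tail(3) evolution_concat_evol[OF \<beta>_evol tail(1,2)]
      initial_concat_evol[OF \<beta>_evol tail(1,2)] terminal_concat_evol[OF \<beta>_evol tail(1,2)]
    by (simp add: full_evolution_def)
  then obtain r where r: "strict_mono_on {0..evlen S} r"
    and rj: "\<And>j. j \<le> evlen S \<Longrightarrow> r j \<le> evlen \<beta> + (evlen S - k)
               \<and> isotypic Q (fst S ! j) (fst (concat_evol \<beta> tail) ! r j)"
    using S \<beta>_evol tail unfolding universal_evolution_def embeds_def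
    by (metis evlen_concat_evol)
  \<comment> \<open>the last \<open>evlen S - k\<close> vertices of \<open>S\<close> use up the appended tail, so \<open>r\<close> maps \<open>{0..k}\<close> into \<open>\<beta>\<close>\<close>
  have "r k + (evlen S - k) \<le> r (evlen S)" "r (evlen S) \<le> evlen \<beta> + (evlen S - k)"
    using strict_mono_on_nat_gap[OF r k] rj[of "evlen S"] by simp_all
  then have rk: "r k \<le> evlen \<beta>" by linarith
  have r_le: "r j \<le> r k" if "j \<le> k" for j
    using strict_mono_on_nat_gap[OF r that k] by simp
  show "embeds Q (prefix_evol k S) \<beta>"
    unfolding embeds_def evlen_prefix_evol[OF S_evol k]
  proof (intro conjI exI[of _ r] allI impI)
    show "k \<le> evlen \<beta>"
      using strict_mono_on_nat_gap[OF r _ k, of 0] rk by simp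
    show "strict_mono_on {0..k} r"
      by (rule monotone_on_subset[OF r]) (use k in auto)
    fix j assume j: "j \<le> k"
    show "r j \<le> evlen \<beta>"
      using r_le[OF j] rk by simp
    show "isotypic Q (fst (prefix_evol k S) ! j) (fst \<beta> ! r j)"
      using rj[of j] j k r_le[OF j] rk \<beta>_evol by (simp add: nth_prefix_evol nth_concat_evol_left)
  qed
qed

theorem theorem5p3:
  fixes Q :: "('v, 'e) quiver" and X :: 'v
  assumes "phylogenetic Q X"
  shows "(\<exists>A. primitive Q A \<and> ancestor Q A X)
    \<and> (\<forall>A B. primitive Q A \<and> ancestor Q A X \<and> primitive Q B \<and> ancestor Q B X \<longrightarrow> isotypic Q A B)
    \<and> (\<forall>ev. short_evolution Q X ev \<longrightarrow> universal_evolution Q X ev)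
    \<and> (\<forall>ev. short_evolution Q X ev \<longrightarrow> (\<forall>Y \<in> set (fst ev). phylogenetic Q Y))"
proof (intro conjI allI impI ballI)
  obtain U where U: "universal_evolution Q X U"
    using assms unfolding phylogenetic_def by blast
  then have U_full: "full_evolution Q X U"
    by (simp add: universal_evolution_def)
  show "\<exists>A. primitive Q A \<and> ancestor Q A X"
    using U_full unfolding full_evolution_def ancestor_def by blast
  show "isotypic Q A B"
    if "primitive Q A \<and> ancestor Q A X \<and> primitive Q B \<and> ancestor Q B X" for A B
    using that primitive_ancestor_isotypic_initial[OF U] by (metis isotypic_sym isotypic_trans)
  show short_universal: "universal_evolution Q X S" if "short_evolution Q X S" for S
    using short_evolution_universal[OF U that] .
  show "phylogenetic Q Y" if S: "short_evolution Q X S" and Y: "Y \<in> set (fst S)" for S Y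
  proof -
    have S_univ: "universal_evolution Q X S"
      using short_universal[OF S] .
    then obtain k where "k \<le> evlen S" "Y = fst S ! k"
      using Y by (auto simp: universal_evolution_def full_evolution_def elim: in_vertices_evolutionE)
    then show ?thesis
      using universal_evolution_prefix[OF S_univ] unfolding phylogenetic_def by blast
  qed
qed

end
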